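(* Let $0<\alpha<1<\eta<2$ and let $D\subseteq\mathbb R^d$ have the property: for each $i\in\{1,\dots,d\}$ with $\mathfrak s_i=1$, if $x,y\in D$ then $y+d(x,y)\mathbf e_i\in D$. Then for all germs $U$ over $D$ and all $R>0$, $$\sup_{x\in D}[U_x]_{C^\alpha(D\cap B_R(x))}\lesssim\big(\|U\|_{G^\eta(D)}+[U]_{G^{\eta,\alpha}(D)}\big)R^{\eta-\alpha},$$ with an implicit constant independent of $U$, $R$ and $D$.
   Context: Fix a scaling $\mathfrak s\in\mathbb N^d$; for $\beta\in\mathbb N_0^d$, $|\beta|:=\sum_i\mathfrak s_i\beta_i$; $d(x,y):=\sum_i|x_i-y_i|^{1/\mathfrak s_i}$, $B_R(x)$ the open ball for $d$, $\mathcal P_k$ the polynomials $\sum_{|\beta|\le k}c_\beta z^\beta$. A germ over $D$ is a family $U=(U_x)_{x\in D}$ of continuous $U_x:D\to\mathbb C$; $\|U\|_{G^\eta(D)}$ is the infimum of $M>0$ with $|U_x(y)|\le M\,d(x,y)^\eta$ for all $x,y\in D$; $[U]_{G^{\eta,\alpha}(D)}$ is the infimum of $M>0$ such that for all $x,y\in D$ there is $P\in\mathcal P_{\lfloor\eta\rfloor}$ with $|(U_x-U_y-P)(z)|\le M\,d(y,z)^\alpha(d(x,y)+d(y,z))^{\eta-\alpha}$ for all $z\in D$. For $\alpha\in(0,1)$ and $A\subseteq\mathbb R^d$, $[f]_{C^\alpha(A)}:=\sup_{y,z\in A,\,y\ne z}|f(y)-f(z)|/d(y,z)^\alpha$. 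*)

theory Defs
  imports "HOL-Analysis.Analysis"
begin

text \<open>Points of R^d are vectors real^'n (d = CARD('n)); a scaling is s :: 'n => nat
  (assumed positive). Germs are complex-valued.\<close>

definition sdist :: "('n::finite \<Rightarrow> nat) \<Rightarrow> real^'n \<Rightarrow> real^'n \<Rightarrow> real" where
  "sdist s x y = (\<Sum>i\<in>UNIV. \<bar>x$i - y$i\<bar> powr (1 / real (s i)))"

definition sball :: "('n::finite \<Rightarrow> nat) \<Rightarrow> real^'n \<Rightarrow> real \<Rightarrow> (real^'n) set" where
  "sball s x R = {y. sdist s x y < R}"

definition sdeg :: "('n::finite \<Rightarrow> nat) \<Rightarrow> ('n \<Rightarrow> nat) \<Rightarrow> nat" where
  "sdeg s \<beta> = (\<Sum>i\<in>UNIV. s i * \<beta> i)"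

definition spoly :: "('n::finite \<Rightarrow> nat) \<Rightarrow> nat \<Rightarrow> (real^'n \<Rightarrow> complex) \<Rightarrow> bool" where
  "spoly s k P \<longleftrightarrow> (\<exists>c :: ('n \<Rightarrow> nat) \<Rightarrow> complex.
     P = (\<lambda>z. \<Sum>\<beta>\<in>{\<beta>. sdeg s \<beta> \<le> k}. c \<beta> * (\<Prod>i\<in>UNIV. complex_of_real (z$i) ^ \<beta> i)))"

definition is_germ :: "(real^'n::finite) set \<Rightarrow> (real^'n \<Rightarrow> real^'n \<Rightarrow> complex) \<Rightarrow> bool" where
  "is_germ D U \<longleftrightarrow> (\<forall>x\<in>D. continuous_on D (U x))"

text \<open>||U||_{G^eta(D)} as an extended real (infimum; +infinity if no bound exists).\<close>
definition germ_norm :: "('n::finite \<Rightarrow> nat) \<Rightarrow> real \<Rightarrow> (real^'n) set \<Rightarrow> (real^'n \<Rightarrow> real^'n \<Rightarrow> complex) \<Rightarrow> ereal" where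
  "germ_norm s \<eta> D U = Inf {ereal M | M. M > 0 \<and>
     (\<forall>x\<in>D. \<forall>y\<in>D. cmod (U x y) \<le> M * sdist s x y powr \<eta>)}"

definition germ_seminorm :: "('n::finite \<Rightarrow> nat) \<Rightarrow> real \<Rightarrow> real \<Rightarrow> (real^'n) set \<Rightarrow> (real^'n \<Rightarrow> real^'n \<Rightarrow> complex) \<Rightarrow> ereal" where
  "germ_seminorm s \<eta> \<alpha> D U = Inf {ereal M | M. M > 0 \<and>
     (\<forall>x\<in>D. \<forall>y\<in>D. \<exists>P. spoly s (nat \<lfloor>\<eta>\<rfloor>) P \<and>
        (\<forall>z\<in>D. cmod (U x z - U y z - P z)
              \<le> M * sdist s y z powr \<alpha> * (sdist s x y + sdist s y z) powr (\<eta> - \<alpha>)))}"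

definition holder_seminorm :: "('n::finite \<Rightarrow> nat) \<Rightarrow> real \<Rightarrow> (real^'n) set \<Rightarrow> (real^'n \<Rightarrow> complex) \<Rightarrow> ereal" where
  "holder_seminorm s \<alpha> A f = Sup {ereal (cmod (f y - f z) / sdist s y z powr \<alpha>) | y z.
     y \<in> A \<and> z \<in> A \<and> y \<noteq> z}"

end

theory Submission
  imports Defs
begin

(* Write U_x - U_y = P + E with P of scaled degree at most one, i.e. affine in the coordinates of
   scaling 1, and E controlled by [U]. As U_y(y) = 0 and E(y) = 0,
   U_x(z) - U_x(y) = U_y(z) + E(z) + P(z) - P(y), and the first two terms are bounded directly.
   The slope of P in a direction e_i with s_i = 1 is read off at y + d(x,y) e_i, which lies in D by
   the assumption on D: there U_x, U_y and E are all of size d(x,y)^eta, so the slope is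
   O(d(x,y)^(eta-1)) = O(R^(eta-1)) because eta > 1. Hence P(z) - P(y) = O(R^(eta-1) d(y,z)),
   which is O(R^(eta-alpha) d(y,z)^alpha) because d(y,z) < 2R. *)

lemma powr_add_le_add_powr:
  fixes a b p :: real
  assumes "0 \<le> a" "0 \<le> b" "0 < p" "p \<le> 1"
  shows "(a + b) powr p \<le> a powr p + b powr p"
proof (cases "a + b = 0")
  case True
  then show ?thesis using assms by simp
next
  case False
  then have ab: "0 < a + b" using assms by simp
  have le_powr: "t \<le> t powr p" if "0 \<le> t" "t \<le> 1" for t :: real
    using powr_mono'[of p 1 t] that assms by simp
  have "(a + b) powr p = (a + b) powr p * (a / (a + b) + b / (a + b))"
    using ab by (simp add: add_divide_distrib[symmetric])
  also have "\<dots> \<le> (a + b) powr p * ((a / (a + b)) powr p + (b / (a + b)) powr p)"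
    using assms ab by (intro mult_left_mono add_mono le_powr) auto
  also have "\<dots> = a powr p + b powr p"
    using assms ab by (simp add: powr_divide distrib_left)
  finally show ?thesis .
qed

lemma powr_le_sq_mult_powr:
  fixes t c R b :: real
  assumes "0 \<le> t" "t \<le> c * R" "1 \<le> c" "0 \<le> b" "b \<le> 2"
  shows "t powr b \<le> c\<^sup>2 * R powr b"
proof -
  have "0 \<le> R" using assms by (smt (verit) zero_le_mult_iff)
  have "t powr b \<le> (c * R) powr b" using assms by (intro powr_mono2) auto
  also have "\<dots> = c powr b * R powr b" using assms \<open>0 \<le> R\<close> by (simp add: powr_mult)
  also have "c powr b \<le> c powr 2" using assms by (intro powr_mono) auto
  also have "c powr 2 = c\<^sup>2" using assms by (simp add: powr_numeral)
  finally show ?thesis by (simp add: mult_right_mono)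
qed

lemma sdist_nonneg: "0 \<le> sdist s x y"
  unfolding sdist_def by (intro sum_nonneg) auto

lemma sdist_self [simp]: "sdist s x x = 0"
  unfolding sdist_def by simp

lemma sdist_commute: "sdist s x y = sdist s y x"
  unfolding sdist_def by (simp add: abs_minus_commute)

lemma sdist_triangle:
  assumes "\<forall>i. s i \<ge> 1"
  shows "sdist s x z \<le> sdist s x y + sdist s y z"
  unfolding sdist_def sum.distrib[symmetric]
proof (intro sum_mono)
  fix i
  define p where "p = 1 / real (s i)"
  have p: "0 < p" "p \<le> 1" using assms[rule_format, of i] unfolding p_def by auto
  have "\<bar>x $ i - z $ i\<bar> powr p \<le> (\<bar>x $ i - y $ i\<bar> + \<bar>y $ i - z $ i\<bar>) powr p"
    using p by (intro powr_mono2) auto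
  also have "\<dots> \<le> \<bar>x $ i - y $ i\<bar> powr p + \<bar>y $ i - z $ i\<bar> powr p"
    using p by (intro powr_add_le_add_powr) auto
  finally show "\<bar>x $ i - z $ i\<bar> powr p \<le> \<bar>x $ i - y $ i\<bar> powr p + \<bar>y $ i - z $ i\<bar> powr p" .
qed

lemma coord_powr_le_sdist: "\<bar>x $ i - y $ i\<bar> powr (1 / real (s i)) \<le> sdist s x y"
  unfolding sdist_def by (rule member_le_sum) auto

lemma abs_coord_diff_le_sdist: "s i = 1 \<Longrightarrow> \<bar>x $ i - y $ i\<bar> \<le> sdist s x y"
  using coord_powr_le_sdist[of x i y s] by (cases "x $ i = y $ i") auto

lemma sdist_pos: "x \<noteq> y \<Longrightarrow> 0 < sdist s x y"
proof -
  assume "x \<noteq> y"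
  then obtain i where "x $ i \<noteq> y $ i" by (metis vec_eq_iff)
  then have "0 < \<bar>x $ i - y $ i\<bar> powr (1 / real (s i))" by simp
  then show ?thesis using coord_powr_le_sdist[of x i y s] by linarith
qed

lemma sdist_add_axis:
  assumes "s i = 1" "0 \<le> h"
  shows "sdist s y (y + h *\<^sub>R axis i 1) = h"
proof -
  have "sdist s y (y + h *\<^sub>R axis i 1) = (\<Sum>j\<in>UNIV. if j = i then h else 0)"
    unfolding sdist_def using assms by (intro sum.cong) (auto simp: axis_def)
  then show ?thesis by simp
qed

lemma sdeg_le_1_cases:
  assumes s: "\<forall>i. s i \<ge> 1" and "sdeg s \<beta> \<le> 1"
  shows "\<beta> = (\<lambda>_. 0) \<or> (\<exists>i. s i = 1 \<and> \<beta> = (\<lambda>j. if j = i then 1 else 0))"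
proof (cases "\<beta> = (\<lambda>_. 0)")
  case False
  then obtain i where "\<beta> i \<noteq> 0" by auto
  have split: "sdeg s \<beta> = s i * \<beta> i + (\<Sum>j\<in>UNIV - {i}. s j * \<beta> j)"
    unfolding sdeg_def by (simp add: sum.remove)
  have "s i * \<beta> i \<ge> 1" using \<open>\<beta> i \<noteq> 0\<close> s[rule_format, of i] by (simp add: Suc_le_eq)
  then have "s i * \<beta> i = 1" and rest: "(\<Sum>j\<in>UNIV - {i}. s j * \<beta> j) = 0"
    using split assms(2) by linarith+
  moreover have "\<beta> j = 0" if "j \<noteq> i" for j
  proof -
    have "s j * \<beta> j = 0" using rest that by simp
    then show ?thesis using s[rule_format, of j] by simp
  qed
  ultimately have "s i = 1 \<and> \<beta> = (\<lambda>j. if j = i then 1 else 0)" by auto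
  then show ?thesis by blast
qed simp

lemma spoly_1_increment:
  assumes s: "\<forall>i. s i \<ge> 1" and "spoly s 1 P"
  obtains b where "\<And>w y. P w - P y = (\<Sum>i\<in>{i. s i = 1}. b i * complex_of_real (w $ i - y $ i))"
proof -
  obtain c where P: "P = (\<lambda>z. \<Sum>\<beta>\<in>{\<beta>. sdeg s \<beta> \<le> 1}. c \<beta> * (\<Prod>i\<in>UNIV. complex_of_real (z$i) ^ \<beta> i))"
    using assms(2) unfolding spoly_def by blast
  define e :: "'a \<Rightarrow> 'a \<Rightarrow> nat" where "e i j = (if j = i then 1 else 0)" for i j
  have sdeg_e: "sdeg s (e i) = 1" if "s i = 1" for i
  proof -
    have "sdeg s (e i) = (\<Sum>j\<in>UNIV. if j = i then 1 else 0)"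
      unfolding sdeg_def e_def using that by (intro sum.cong) auto
    then show ?thesis by simp
  qed
  have "{\<beta>. sdeg s \<beta> \<le> 1} \<subseteq> insert (\<lambda>_. 0) (e ` {i. s i = 1})"
    using sdeg_le_1_cases[OF s] by (fastforce simp: e_def[abs_def])
  moreover have "insert (\<lambda>_. 0) (e ` {i. s i = 1}) \<subseteq> {\<beta>. sdeg s \<beta> \<le> 1}"
    using sdeg_e by (auto simp: sdeg_def)
  ultimately have degs: "{\<beta>. sdeg s \<beta> \<le> 1} = insert (\<lambda>_. 0) (e ` {i. s i = 1})" by blast
  have notin: "(\<lambda>_. 0) \<notin> e ` {i. s i = 1}"
    unfolding e_def by (auto dest: fun_cong[where x = i for i] split: if_splits)
  have inj: "inj_on e {i. s i = 1}"
    unfolding e_def inj_on_def by (metis one_neq_zero)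
  have monomial: "(\<Prod>j\<in>UNIV. complex_of_real (z$j) ^ e i j) = complex_of_real (z $ i)" for z i
  proof -
    have "(\<Prod>j\<in>UNIV. complex_of_real (z$j) ^ e i j) = (\<Prod>j\<in>UNIV. if j = i then complex_of_real (z$j) else 1)"
      unfolding e_def by (intro prod.cong) auto
    then show ?thesis by simp
  qed
  have affine: "P z = c (\<lambda>_. 0) + (\<Sum>i\<in>{i. s i = 1}. c (e i) * complex_of_real (z $ i))" for z
    unfolding P degs sum.insert[OF finite_imageI[OF finite] notin] sum.reindex[OF inj]
    by (simp add: monomial)
  show ?thesis
    by (rule that[of "\<lambda>i. c (e i)"]) (simp add: affine sum_subtractf[symmetric] algebra_simps)
qed

lemma norm_affine_increment_le:
  fixes b :: "'n::finite \<Rightarrow> complex" and B :: real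
  assumes "0 \<le> B" and "\<And>i. s i = 1 \<Longrightarrow> cmod (b i) \<le> B"
  shows "cmod (\<Sum>i\<in>{i. s i = 1}. b i * complex_of_real (z $ i - y $ i)) \<le> CARD('n) * B * sdist s y z"
proof -
  have "cmod (\<Sum>i\<in>{i. s i = 1}. b i * complex_of_real (z $ i - y $ i))
      \<le> (\<Sum>i\<in>{i. s i = 1}. cmod (b i) * \<bar>z $ i - y $ i\<bar>)"
    by (rule order_trans[OF norm_sum]) (simp add: norm_mult del: of_real_diff)
  also have "\<dots> \<le> (\<Sum>i\<in>{i. s i = 1}. B * sdist s y z)"
  proof (intro sum_mono mult_mono)
    fix i assume "i \<in> {i. s i = 1}"
    then show "cmod (b i) \<le> B" "\<bar>z $ i - y $ i\<bar> \<le> sdist s y z"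
      using assms(2) abs_coord_diff_le_sdist[of s i y z] by (auto simp: abs_minus_commute)
  qed (use assms in auto)
  also have "\<dots> \<le> CARD('n) * (B * sdist s y z)"
    using assms sdist_nonneg[of s y z] by (simp add: card_mono mult_right_mono)
  finally show ?thesis by (simp add: mult.assoc)
qed

lemma powr_add_le_mult_powr:
  fixes t R a b :: real
  assumes "0 \<le> t" "t \<le> 2 * R" "0 \<le> b" "b \<le> 2"
  shows "t powr (a + b) \<le> 4 * R powr b * t powr a"
  using mult_left_mono[OF powr_le_sq_mult_powr[OF assms(1,2) _ assms(3,4)], of "t powr a"]
  by (simp add: powr_add mult_ac)

(* N and M are any constants admitted in the infima defining germ_norm and germ_seminorm;
   the degree 1 of P is nat (floor eta). *)
locale germ_bounds =
  fixes s :: "'n::finite \<Rightarrow> nat" and \<alpha> \<eta> :: real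
    and D :: "(real^'n) set" and U :: "real^'n \<Rightarrow> real^'n \<Rightarrow> complex" and N M :: real
  assumes scaling: "\<forall>i. s i \<ge> 1"
    and alpha: "0 < \<alpha>" "\<alpha> < 1" and eta: "1 < \<eta>" "\<eta> < 2"
    and shift_mem: "\<And>i x y. s i = 1 \<Longrightarrow> x \<in> D \<Longrightarrow> y \<in> D \<Longrightarrow> y + sdist s x y *\<^sub>R axis i 1 \<in> D"
    and N_nonneg: "0 \<le> N"
    and norm_bound: "\<And>x y. x \<in> D \<Longrightarrow> y \<in> D \<Longrightarrow> cmod (U x y) \<le> N * sdist s x y powr \<eta>"
    and M_nonneg: "0 \<le> M"
    and seminorm_bound: "\<And>x y. x \<in> D \<Longrightarrow> y \<in> D \<Longrightarrow> \<exists>P. spoly s 1 P \<and>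
          (\<forall>z\<in>D. cmod (U x z - U y z - P z)
             \<le> M * sdist s y z powr \<alpha> * (sdist s x y + sdist s y z) powr (\<eta> - \<alpha>))"
begin

lemma germ_diag_eq_0: "x \<in> D \<Longrightarrow> U x x = 0"
  using norm_bound[of x x] eta by simp

lemma poly_eq_germ_at_base:
  assumes "x \<in> D" "y \<in> D"
    and "\<forall>w\<in>D. cmod (U x w - U y w - P w)
         \<le> M * sdist s y w powr \<alpha> * (sdist s x y + sdist s y w) powr (\<eta> - \<alpha>)"
  shows "P y = U x y"
  using assms(3)[rule_format, OF assms(2)] germ_diag_eq_0[OF assms(2)] alpha by simp

lemma affine_coefficient_bound:
  assumes xD: "x \<in> D" and yD: "y \<in> D" and i: "s i = 1"
    and P_error: "\<forall>w\<in>D. cmod (U x w - U y w - P w)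
         \<le> M * sdist s y w powr \<alpha> * (sdist s x y + sdist s y w) powr (\<eta> - \<alpha>)"
    and P_incr: "\<And>w. P w - P y = (\<Sum>j\<in>{j. s j = 1}. b j * complex_of_real (w $ j - y $ j))"
  shows "cmod (b i) * sdist s x y \<le> 6 * (N + M) * sdist s x y powr \<eta>"
proof -
  define h where "h = sdist s x y"
  define w where "w = y + h *\<^sub>R axis i 1"
  have h: "0 \<le> h" unfolding h_def by (rule sdist_nonneg)
  have wD: "w \<in> D" using shift_mem[OF i xD yD] unfolding w_def h_def .
  have yw: "sdist s y w = h" unfolding w_def using sdist_add_axis[of s i h y] i h by simp
  have xw: "sdist s x w \<le> 2 * h"
    using sdist_triangle[OF scaling, of x w y] yw unfolding h_def by simp
  have "P w - P y = (\<Sum>j\<in>{j. s j = 1}. if j = i then b i * complex_of_real h else 0)"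
    unfolding P_incr by (intro sum.cong) (auto simp: w_def axis_def)
  also have "\<dots> = b i * complex_of_real h" using i by simp
  finally have "b i * complex_of_real h = U x w - U y w - (U x w - U y w - P w) - U x y"
    using poly_eq_germ_at_base[OF xD yD P_error] by simp
  then have "cmod (b i) * h = cmod (U x w - U y w - (U x w - U y w - P w) - U x y)"
    using h by (metis norm_mult norm_of_real abs_of_nonneg)
  also have "\<dots> \<le> cmod (U x w) + cmod (U y w) + cmod (U x w - U y w - P w) + cmod (U x y)"
    by (smt (verit) norm_triangle_ineq4)
  also have "\<dots> \<le> 4 * N * h powr \<eta> + N * h powr \<eta> + 4 * M * h powr \<eta> + N * h powr \<eta>"
  proof (intro add_mono)
    have "sdist s x w powr \<eta> \<le> 4 * h powr \<eta>"
      using powr_le_sq_mult_powr[OF sdist_nonneg xw] eta by simp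
    then show "cmod (U x w) \<le> 4 * N * h powr \<eta>"
      using norm_bound[OF xD wD] N_nonneg mult_left_mono by fastforce
    have "(h + h) powr (\<eta> - \<alpha>) \<le> 4 * h powr (\<eta> - \<alpha>)"
      using powr_le_sq_mult_powr[of "h + h" 2 h "\<eta> - \<alpha>"] h alpha eta by simp
    then have "M * h powr \<alpha> * (h + h) powr (\<eta> - \<alpha>) \<le> M * h powr \<alpha> * (4 * h powr (\<eta> - \<alpha>))"
      using M_nonneg by (intro mult_left_mono) auto
    also have "\<dots> = 4 * M * (h powr \<alpha> * h powr (\<eta> - \<alpha>))" by (simp only: ac_simps)
    also have "\<dots> = 4 * M * h powr \<eta>" by (simp add: powr_add[symmetric])
    finally show "cmod (U x w - U y w - P w) \<le> 4 * M * h powr \<eta>"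
      using P_error[rule_format, OF wD] yw unfolding h_def by simp
  qed (use norm_bound[OF yD wD] norm_bound[OF xD yD] yw in \<open>auto simp: h_def\<close>)
  also have "\<dots> \<le> 6 * (N + M) * h powr \<eta>"
    using M_nonneg by (simp add: algebra_simps)
  finally show ?thesis unfolding h_def .
qed

lemma affine_increment_bound:
  assumes xD: "x \<in> D" and yD: "y \<in> D" and "x \<noteq> y"
    and xy: "sdist s x y < R" and yz: "sdist s y z \<le> 2 * R"
    and P_error: "\<forall>w\<in>D. cmod (U x w - U y w - P w)
         \<le> M * sdist s y w powr \<alpha> * (sdist s x y + sdist s y w) powr (\<eta> - \<alpha>)"
    and P_incr: "\<And>w. P w - P y = (\<Sum>i\<in>{i. s i = 1}. b i * complex_of_real (w $ i - y $ i))"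
  shows "cmod (P z - P y) \<le> 24 * real CARD('n) * (N + M) * (R powr (\<eta> - \<alpha>) * sdist s y z powr \<alpha>)"
proof -
  define h where "h = sdist s x y"
  have h: "0 < h" "h < R" using sdist_pos[OF \<open>x \<noteq> y\<close>] xy unfolding h_def by auto
  have b_bound: "cmod (b i) \<le> 6 * (N + M) * R powr (\<eta> - 1)" if "s i = 1" for i
  proof -
    have "cmod (b i) * h \<le> (6 * (N + M) * h powr (\<eta> - 1)) * h"
      using affine_coefficient_bound[OF xD yD that P_error P_incr] h by (simp add: powr_diff h_def)
    then have "cmod (b i) \<le> 6 * (N + M) * h powr (\<eta> - 1)" using h by simp
    also have "\<dots> \<le> 6 * (N + M) * R powr (\<eta> - 1)"
      using h eta N_nonneg M_nonneg by (intro mult_left_mono powr_mono2) auto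
    finally show ?thesis .
  qed
  have "cmod (P z - P y) \<le> CARD('n) * (6 * (N + M) * R powr (\<eta> - 1)) * sdist s y z"
    unfolding P_incr using b_bound N_nonneg M_nonneg by (intro norm_affine_increment_le) auto
  also have "\<dots> \<le> CARD('n) * (6 * (N + M) * R powr (\<eta> - 1)) * (4 * R powr (1 - \<alpha>) * sdist s y z powr \<alpha>)"
    using powr_add_le_mult_powr[OF sdist_nonneg yz, of "1 - \<alpha>" \<alpha>] alpha N_nonneg M_nonneg
    by (intro mult_left_mono) auto
  also have "\<dots> = 24 * real CARD('n) * (N + M) * (R powr (\<eta> - \<alpha>) * sdist s y z powr \<alpha>)"
    using powr_add[of R "\<eta> - 1" "1 - \<alpha>"] by (simp add: algebra_simps)
  finally show ?thesis .
qed

lemma holder_increment_bound: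
  assumes xD: "x \<in> D" and yD: "y \<in> D" and zD: "z \<in> D"
    and xy: "sdist s x y < R" and xz: "sdist s x z < R"
  shows "cmod (U x y - U x z) \<le> 24 * (real CARD('n) + 1) * (N + M) * (R powr (\<eta> - \<alpha>) * sdist s y z powr \<alpha>)"
proof -
  define \<delta> where "\<delta> = sdist s y z"
  define K where "K = R powr (\<eta> - \<alpha>) * \<delta> powr \<alpha>"
  have \<delta>: "0 \<le> \<delta>" unfolding \<delta>_def by (rule sdist_nonneg)
  have \<delta>_le: "\<delta> \<le> 2 * R"
    using sdist_triangle[OF scaling, of y z x] sdist_commute[of s x y] xy xz unfolding \<delta>_def by linarith
  have Uyz: "cmod (U y z) \<le> 4 * N * K"
    using norm_bound[OF yD zD] powr_add_le_mult_powr[OF \<delta> \<delta>_le, of "\<eta> - \<alpha>" \<alpha>] alpha eta N_nonneg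
      mult_left_mono[of _ _ N]
    unfolding K_def \<delta>_def by fastforce
  have "cmod (U x y - U x z) \<le> (4 * N + 9 * M + 24 * real CARD('n) * (N + M)) * K"
  proof (cases "x = y")
    case True
    have "4 * N \<le> 4 * N + 9 * M + 24 * real CARD('n) * (N + M)" using N_nonneg M_nonneg by simp
    then have "4 * N * K \<le> (4 * N + 9 * M + 24 * real CARD('n) * (N + M)) * K"
      unfolding K_def by (rule mult_right_mono) simp
    then show ?thesis using Uyz germ_diag_eq_0[OF yD] True by simp
  next
    case False
    obtain P where "spoly s 1 P" and P_error: "\<forall>w\<in>D. cmod (U x w - U y w - P w)
         \<le> M * sdist s y w powr \<alpha> * (sdist s x y + sdist s y w) powr (\<eta> - \<alpha>)"
      using seminorm_bound[OF xD yD] by blast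
    then obtain b where "\<And>w. P w - P y = (\<Sum>i\<in>{i. s i = 1}. b i * complex_of_real (w $ i - y $ i))"
      using spoly_1_increment[OF scaling] by metis
    then have Pzy: "cmod (P z - P y) \<le> 24 * real CARD('n) * (N + M) * K"
      using affine_increment_bound[OF xD yD False xy \<delta>_le[unfolded \<delta>_def] P_error]
      unfolding K_def \<delta>_def by blast
    have "(sdist s x y + \<delta>) powr (\<eta> - \<alpha>) \<le> 9 * R powr (\<eta> - \<alpha>)"
      using powr_le_sq_mult_powr[of "sdist s x y + \<delta>" 3 R "\<eta> - \<alpha>"] sdist_nonneg[of s x y] xy \<delta> \<delta>_le
        alpha eta by simp
    then have "M * \<delta> powr \<alpha> * (sdist s x y + \<delta>) powr (\<eta> - \<alpha>) \<le> M * \<delta> powr \<alpha> * (9 * R powr (\<eta> - \<alpha>))"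
      using M_nonneg by (intro mult_left_mono) auto
    then have Ez: "cmod (U x z - U y z - P z) \<le> 9 * M * K"
      using P_error[rule_format, OF zD] unfolding K_def \<delta>_def by (simp add: ac_simps)
    have "U x y - U x z = - (U y z + (U x z - U y z - P z) + (P z - P y))"
      using poly_eq_germ_at_base[OF xD yD P_error] by simp
    then have "cmod (U x y - U x z) = cmod (U y z + (U x z - U y z - P z) + (P z - P y))"
      by (metis norm_minus_cancel)
    also have "\<dots> \<le> cmod (U y z) + cmod (U x z - U y z - P z) + cmod (P z - P y)"
      by (rule order_trans[OF norm_triangle_ineq add_right_mono[OF norm_triangle_ineq]])
    finally show ?thesis using Uyz Ez Pzy by (simp add: algebra_simps)
  qed
  also have "\<dots> \<le> 24 * (real CARD('n) + 1) * (N + M) * K"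
    using N_nonneg M_nonneg unfolding K_def
    by (intro mult_right_mono) (auto simp: algebra_simps)
  finally show ?thesis unfolding K_def \<delta>_def .
qed

end

lemma ereal_le_mult_Inf_add_Inf:
  fixes q k :: real
  assumes k: "0 < k" and bound: "\<And>a b. 0 < a \<Longrightarrow> P a \<Longrightarrow> 0 < b \<Longrightarrow> Q b \<Longrightarrow> q \<le> k * (a + b)"
  shows "ereal q \<le> ereal k * (Inf {ereal a | a. 0 < a \<and> P a} + Inf {ereal b | b. 0 < b \<and> Q b})"
proof -
  define A B where "A = {a. 0 < a \<and> P a}" and "B = {b. 0 < b \<and> Q b}"
  have sets: "{ereal a | a. 0 < a \<and> P a} = ereal ` A" "{ereal b | b. 0 < b \<and> Q b} = ereal ` B"
    unfolding A_def B_def by auto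
  have Inf_nonneg: "0 \<le> Inf (ereal ` A)" "0 \<le> Inf (ereal ` B)"
    unfolding A_def B_def by (auto intro: Inf_greatest)
  show ?thesis
  proof (cases "A = {} \<or> B = {}")
    case True
    then have "Inf (ereal ` A) = \<infinity> \<or> Inf (ereal ` B) = \<infinity>"
      by (auto simp: top_ereal_def)
    then have "Inf (ereal ` A) + Inf (ereal ` B) = \<infinity>"
      using Inf_nonneg by auto
    then have "ereal k * (Inf (ereal ` A) + Inf (ereal ` B)) = \<infinity>"
      using k by (simp only: ereal_mult_infty) simp
    then show ?thesis unfolding sets by (metis ereal_less_eq(1))
  next
    case False
    have below: "bdd_below A" "bdd_below B"
      unfolding A_def B_def by (auto intro: bdd_belowI[of _ 0])
    have sum_bound: "q / k - b \<le> a" if "a \<in> A" "b \<in> B" for a b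
    proof -
      have "q / k \<le> a + b"
        using bound[of a b] that k unfolding A_def B_def by (simp add: pos_divide_le_eq mult.commute)
      then show ?thesis by simp
    qed
    have "q / k - Inf A \<le> Inf B"
    proof (rule cInf_greatest)
      fix b assume "b \<in> B"
      then have "q / k - b \<le> Inf A"
        using False sum_bound by (intro cInf_greatest) auto
      then show "q / k - Inf A \<le> b" by simp
    qed (use False in simp)
    then have "q / k \<le> Inf A + Inf B" by simp
    then have "q \<le> k * (Inf A + Inf B)" using k by (simp add: pos_divide_le_eq mult.commute)
    moreover have "Inf (ereal ` A) = ereal (Inf A)" "Inf (ereal ` B) = ereal (Inf B)"
      using False ereal_Inf'[OF below(1)] ereal_Inf'[OF below(2)] by simp_all
    ultimately show ?thesis unfolding sets by simp
  qed
qed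

lemma holder_seminorm_le_germ_norms:
  fixes s :: "'n::finite \<Rightarrow> nat" and U :: "real^'n \<Rightarrow> real^'n \<Rightarrow> complex"
  assumes "\<forall>i. s i \<ge> 1" "0 < \<alpha>" "\<alpha> < 1" "1 < \<eta>" "\<eta> < 2"
    and shift: "\<forall>i. s i = 1 \<longrightarrow> (\<forall>x\<in>D. \<forall>y\<in>D. y + sdist s x y *\<^sub>R axis i 1 \<in> D)"
    and "x \<in> D" "0 < R"
  shows "holder_seminorm s \<alpha> (D \<inter> sball s x R) (U x)
    \<le> ereal (24 * (real CARD('n) + 1)) * (germ_norm s \<eta> D U + germ_seminorm s \<eta> \<alpha> D U) * ereal (R powr (\<eta> - \<alpha>))"
proof -
  define k where "k = 24 * (real CARD('n) + 1) * R powr (\<eta> - \<alpha>)"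
  have "\<lfloor>\<eta>\<rfloor> = 1" using assms by (simp add: floor_eq_iff)
  then have "nat \<lfloor>\<eta>\<rfloor> = 1" by simp
  have "ereal (cmod (U x y - U x z) / sdist s y z powr \<alpha>)
      \<le> ereal k * (germ_norm s \<eta> D U + germ_seminorm s \<eta> \<alpha> D U)"
    if "y \<in> D \<inter> sball s x R" "z \<in> D \<inter> sball s x R" "y \<noteq> z" for y z
    unfolding germ_norm_def germ_seminorm_def
  proof (rule ereal_le_mult_Inf_add_Inf)
    fix N M assume N: "0 < N" "\<forall>x\<in>D. \<forall>y\<in>D. cmod (U x y) \<le> N * sdist s x y powr \<eta>"
      and M: "0 < M" "\<forall>x\<in>D. \<forall>y\<in>D. \<exists>P. spoly s (nat \<lfloor>\<eta>\<rfloor>) P \<and>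
        (\<forall>z\<in>D. cmod (U x z - U y z - P z)
              \<le> M * sdist s y z powr \<alpha> * (sdist s x y + sdist s y z) powr (\<eta> - \<alpha>))"
    interpret germ_bounds s \<alpha> \<eta> D U N M
      using assms N M \<open>nat \<lfloor>\<eta>\<rfloor> = 1\<close> by unfold_locales auto
    show "cmod (U x y - U x z) / sdist s y z powr \<alpha> \<le> k * (N + M)"
      using holder_increment_bound[of x y z R] \<open>x \<in> D\<close> that sdist_pos[OF \<open>y \<noteq> z\<close>, of s]
      by (simp add: sball_def k_def pos_divide_le_eq ac_simps)
  qed (use \<open>0 < R\<close> in \<open>simp add: k_def\<close>)
  moreover have "ereal k * (germ_norm s \<eta> D U + germ_seminorm s \<eta> \<alpha> D U)
      = ereal (24 * (real CARD('n) + 1)) * (germ_norm s \<eta> D U + germ_seminorm s \<eta> \<alpha> D U) * ereal (R powr (\<eta> - \<alpha>))"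
    unfolding k_def by (simp only: times_ereal.simps(1)[symmetric] ac_simps)
  ultimately show ?thesis
    unfolding holder_seminorm_def by (auto intro!: Sup_least)
qed

theorem lemma2p5:
  fixes s :: "'n::finite \<Rightarrow> nat" and \<alpha> \<eta> :: real
  assumes "\<forall>i. s i \<ge> 1" and "0 < \<alpha>" and "\<alpha> < 1" and "1 < \<eta>" and "\<eta> < 2"
  shows "\<exists>C>0. \<forall>(D :: (real^'n) set) (U :: real^'n \<Rightarrow> real^'n \<Rightarrow> complex) (R :: real).
     (\<forall>i. s i = 1 \<longrightarrow> (\<forall>x\<in>D. \<forall>y\<in>D. y + sdist s x y *\<^sub>R axis i 1 \<in> D)) \<longrightarrow>
     is_germ D U \<longrightarrow> R > 0 \<longrightarrow>
     (SUP x\<in>D. holder_seminorm s \<alpha> (D \<inter> sball s x R) (U x))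
       \<le> ereal C * (germ_norm s \<eta> D U + germ_seminorm s \<eta> \<alpha> D U) * ereal (R powr (\<eta> - \<alpha>))"
proof (intro exI[of _ "24 * (real CARD('n) + 1)"] conjI allI impI SUP_least)
  fix D :: "(real^'n) set" and U :: "real^'n \<Rightarrow> real^'n \<Rightarrow> complex" and R :: real and x
  assume shift: "\<forall>i. s i = 1 \<longrightarrow> (\<forall>x\<in>D. \<forall>y\<in>D. y + sdist s x y *\<^sub>R axis i 1 \<in> D)"
    and "is_germ D U"
    and "R > 0" and "x \<in> D"
  show "holder_seminorm s \<alpha> (D \<inter> sball s x R) (U x)
      \<le> ereal (24 * (real CARD('n) + 1)) * (germ_norm s \<eta> D U + germ_seminorm s \<eta> \<alpha> D U)
        * ereal (R powr (\<eta> - \<alpha>))"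
    by (rule holder_seminorm_le_germ_norms[OF assms shift \<open>x \<in> D\<close> \<open>R > 0\<close>])
qed simp

end
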